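(* Let $D\geq2d+1$ and $0<\delta<\Delta/3$, with the setting and standing assumptions of the context. Let $\mathcal{A}_{2,\delta}$ be the set of $c$ such that $\|c\|<a_{0}$ and $F_{c}(x_{1})\neq F_{c}(\phi_{c}(x_{1}))$ for every $x_{1}\in K$ satisfying $\|x_{1}-\xi_{j}(c)\|\geq3\delta$ for all $j\in\{1,\ldots,m\}$. Then every point of the open ball $\{c:\|c\|<a_{0}\}$ is a Lebesgue point of $\mathcal{A}_{2,\delta}$, and therefore the probability of $\mathcal{A}_{2,\delta}$ relative to this ball is $1$.
   Context: Notation: $\pi_{i}$ is the $i$-th coordinate projection on $\mathbb{R}^{d}$, $\mathbf{e}_{1}=(1,0,\ldots,0)$; for $\alpha\in\mathbb{Z}_{\geq0}^{d}$, $p_{\alpha}(x)=\prod_i(\pi_{i}x)^{\alpha_{i}}$; $\mathcal{I}_{2D-1}$ is the set of $\alpha$ with $|\alpha|\leq2D-1$, of cardinality $D_{\alpha}$; $c=(c_{\alpha})\in\mathbb{R}^{D_{\alpha}}$ with Euclidean norm. $\phi:\mathbb{R}^{d}\to\mathbb{R}^{d}$ is a diffeomorphism, $\phi_{c}(x)=\phi(x)+\mathbf{e}_{1}\sum_{\alpha}c_{\alpha}p_{\alpha}(x)$, and $F_{c}(x)=(\pi_{1}x,\pi_{1}\phi_{c}(x),\ldots,\pi_{1}\phi_{c}^{D-1}(x))$. Standing assumptions: $K$ is a compact ball centered at the origin, $K^{+}\supset K$ a larger compact ball with $\phi^{j}(x)\in K^{+}$ for $x\in K$, $0\leq j\leq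 D-1$; $a_{0}>0$ is such that $\phi_{c}^{j}(x)\in K^{+}$ for $x\in K$, $0\leq j\leq D-1$, $\|c\|\leq a_{0}$; and for all $\|c\|\leq a_{0}$: $\phi_{c}$ is a $C^{3}$ diffeomorphism; $\phi_{c}$ has exactly $m$ fixed points $\xi_{1}(c),\ldots,\xi_{m}(c)$ (labelled consistently in $c$); no other periodic points of period $<2D$; all fixed points hyperbolic with $\pi_{1}\xi_{i}(c)\neq\pi_{1}\xi_{j}(c)$ for $i\neq j$; $F_{c}$ immersive at each fixed point. $\Delta$ is the minimum distance between distinct fixed points of $\phi_{c}$ lying in $K$, over $\|c\|\leq a_{0}$. A point $\mathfrak{a}$ is a Lebesgue point of a measurable set $A$ if $\mu(A\cap B_{\epsilon}(\mathfrak{a}))/\mu(B_{\epsilon}(\mathfrak{a}))\to1$ as $\epsilon\to0$ ($B_\epsilon$ open ball, $\mu$ Lebesgue measure); probability of $A$ relative to $B$ is $\mu(A\cap B)/\mu(B)$. *)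

theory Defs
  imports "HOL-Analysis.Analysis"
begin

text \<open>R^d is modelled as (real,'n) vec with a well-ordered finite index type; the first
coordinate is the least index.\<close>

definition first_idx :: "'n::{finite,wellorder}" where
  "first_idx = (LEAST i. True)"

definition proj1 :: "(real,'n::{finite,wellorder}) vec \<Rightarrow> real" where
  "proj1 x = x $ first_idx"

definition e1 :: "(real,'n::{finite,wellorder}) vec" where
  "e1 = axis first_idx 1"

definition multi_idx :: "nat \<Rightarrow> (('n::finite) \<Rightarrow> nat) set" where
  "multi_idx k = {\<alpha>. (\<Sum>i\<in>UNIV. \<alpha> i) \<le> k}"

definition monom :: "('n::finite \<Rightarrow> nat) \<Rightarrow> (real,'n) vec \<Rightarrow> real" where
  "monom \<alpha> x = (\<Prod>i\<in>UNIV. (x $ i) ^ (\<alpha> i))"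

text \<open>Parameter vectors c in R^{D_alpha} are functions on I_{2D-1}, extensional
(undefined outside); the Euclidean norm:\<close>

definition cnorm :: "'a set \<Rightarrow> ('a \<Rightarrow> real) \<Rightarrow> real" where
  "cnorm I c = sqrt (\<Sum>\<alpha>\<in>I. (c \<alpha>)\<^sup>2)"

definition param_space :: "nat \<Rightarrow> ((('n::finite) \<Rightarrow> nat) \<Rightarrow> real) set" where
  "param_space D = PiE (multi_idx (2*D-1)) (\<lambda>_. UNIV)"

definition leb_param :: "nat \<Rightarrow> ((('n::finite) \<Rightarrow> nat) \<Rightarrow> real) measure" where
  "leb_param D = completion (PiM (multi_idx (2*D-1)) (\<lambda>_. lborel))"

definition cball_open :: "nat \<Rightarrow> ((('n::finite) \<Rightarrow> nat) \<Rightarrow> real) \<Rightarrow> real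
     \<Rightarrow> ((('n::finite) \<Rightarrow> nat) \<Rightarrow> real) set" where
  "cball_open D a \<epsilon> = {c \<in> param_space D. cnorm (multi_idx (2*D-1)) (\<lambda>\<alpha>. c \<alpha> - a \<alpha>) < \<epsilon>}"

definition lebesgue_point :: "nat \<Rightarrow> ((('n::finite) \<Rightarrow> nat) \<Rightarrow> real) set
     \<Rightarrow> ((('n::finite) \<Rightarrow> nat) \<Rightarrow> real) \<Rightarrow> bool" where
  "lebesgue_point D A a \<longleftrightarrow>
     ((\<lambda>\<epsilon>. measure (leb_param D) (A \<inter> cball_open D a \<epsilon>) / measure (leb_param D) (cball_open D a \<epsilon>))
        \<longlongrightarrow> 1) (at_right 0)"

definition rel_prob :: "nat \<Rightarrow> ((('n::finite) \<Rightarrow> nat) \<Rightarrow> real) set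
     \<Rightarrow> ((('n::finite) \<Rightarrow> nat) \<Rightarrow> real) set \<Rightarrow> real" where
  "rel_prob D A B = measure (leb_param D) (A \<inter> B) / measure (leb_param D) B"

definition phi_c :: "nat \<Rightarrow> ((real,'n::{finite,wellorder}) vec \<Rightarrow> (real,'n) vec) \<Rightarrow> (('n \<Rightarrow> nat) \<Rightarrow> real)
     \<Rightarrow> (real,'n) vec \<Rightarrow> (real,'n) vec" where
  "phi_c D \<phi> c x = \<phi> x + (\<Sum>\<alpha>\<in>multi_idx (2*D-1). c \<alpha> * monom \<alpha> x) *\<^sub>R e1"

definition delay_map :: "nat \<Rightarrow> ((real,'n::{finite,wellorder}) vec \<Rightarrow> (real,'n) vec) \<Rightarrow> (('n \<Rightarrow> nat) \<Rightarrow> real)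
     \<Rightarrow> (real,'n) vec \<Rightarrow> real list" where
  "delay_map D \<phi> c x = map (\<lambda>j. proj1 ((phi_c D \<phi> c ^^ j) x)) [0..<D]"

fun Ck :: "nat \<Rightarrow> ('a::euclidean_space \<Rightarrow> 'b::real_normed_vector) \<Rightarrow> bool" where
  "Ck 0 f = continuous_on UNIV f"
| "Ck (Suc k) f = ((\<forall>x. f differentiable (at x)) \<and>
      (\<forall>b\<in>Basis. Ck k (\<lambda>x. frechet_derivative f (at x) b)))"

definition diffeo_Ck :: "nat \<Rightarrow> ('a::euclidean_space \<Rightarrow> 'a) \<Rightarrow> bool" where
  "diffeo_Ck k f \<longleftrightarrow> bij f \<and> Ck k f \<and> Ck k (inv f)"

definition hyperbolic_fp :: "((real,'n::finite) vec \<Rightarrow> (real,'n) vec) \<Rightarrow> (real,'n) vec \<Rightarrow> bool" where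
  "hyperbolic_fp f p \<longleftrightarrow> f p = p \<and> f differentiable (at p) \<and>
     (\<forall>z::complex. cmod z = 1 \<longrightarrow>
        det (\<chi> i j. complex_of_real (matrix (frechet_derivative f (at p)) $ i $ j)
                    - (if i = j then z else 0)) \<noteq> 0)"

definition immersive_at :: "nat \<Rightarrow> ((real,'n::{finite,wellorder}) vec \<Rightarrow> (real,'n) vec) \<Rightarrow> (('n \<Rightarrow> nat) \<Rightarrow> real)
     \<Rightarrow> (real,'n) vec \<Rightarrow> bool" where
  "immersive_at D \<phi> c p \<longleftrightarrow>
     (\<forall>j<D. (\<lambda>x. proj1 ((phi_c D \<phi> c ^^ j) x)) differentiable (at p)) \<and>
     (\<forall>v. (\<forall>j<D. frechet_derivative (\<lambda>x. proj1 ((phi_c D \<phi> c ^^ j) x)) (at p) v = 0) \<longrightarrow> v = 0)"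

text \<open>Delta: minimum distance between distinct fixed points lying in K, over all
parameters with norm at most a0 (as an extended real; +infinity if there are no such pairs).\<close>

definition fp_min_dist :: "nat \<Rightarrow> real \<Rightarrow> ((real,'n::finite) vec) set \<Rightarrow> nat
     \<Rightarrow> (nat \<Rightarrow> (('n \<Rightarrow> nat) \<Rightarrow> real) \<Rightarrow> (real,'n) vec) \<Rightarrow> ereal" where
  "fp_min_dist D a0 K m \<xi> = Inf {ereal (dist (\<xi> i c) (\<xi> j c)) | i j c.
      i \<in> {1..m} \<and> j \<in> {1..m} \<and> \<xi> i c \<noteq> \<xi> j c \<and> \<xi> i c \<in> K \<and> \<xi> j c \<in> K \<and>
      c \<in> param_space D \<and> cnorm (multi_idx (2*D-1)) c \<le> a0}"

end

theory Submission
  imports Defs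
begin

(* If F_c(x) = F_c(\<phi>_c x), the points x, \<phi>_c x, ..., \<phi>_c^D x share their first
coordinate, so they also form the orbit of x under the c-independent map
\<psi> y = \<phi> y + (\<pi>_1 y - \<pi>_1 \<phi> y) e_1, and c solves the D linear equations
\<Sum>_\<alpha> c_\<alpha> p_\<alpha>(\<psi>^j x) = \<pi>_1 \<psi>^j x - \<pi>_1 \<phi>(\<psi>^j x), j < D.  Away from the fixed points
these orbit points are distinct (there are no short periods), so by Lagrange interpolation
d+1 of the equations have a nonsingular (d+1)x(d+1) minor in c.  Solving locally for the
corresponding d+1 coordinates of c by Cramer's rule shows that every slice of the set of
bad parameters is a differentiable image of a subset of R^d in R^(d+1), hence negligible;
by Fubini the bad set is null, and a null exceptional set makes every point of the ball a
Lebesgue point of its complement. *)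

section \<open>Polynomials of bounded degree and interpolation\<close>

lemma finite_multi_idx: "finite (multi_idx k :: ('n::finite \<Rightarrow> nat) set)"
proof -
  have "multi_idx k \<subseteq> PiE (UNIV::'n set) (\<lambda>_. {0..k})"
  proof
    fix \<alpha> :: "'n \<Rightarrow> nat" assume "\<alpha> \<in> multi_idx k"
    then have "(\<Sum>i\<in>UNIV. \<alpha> i) \<le> k" by (simp add: multi_idx_def)
    then have "\<alpha> i \<le> k" for i using member_le_sum[of i UNIV \<alpha>] by simp
    then show "\<alpha> \<in> PiE UNIV (\<lambda>_. {0..k})" by auto
  qed
  then show ?thesis by (rule finite_subset) (simp add: finite_PiE)
qed

lemma multi_idx_mono: "k \<le> k' \<Longrightarrow> multi_idx k \<subseteq> multi_idx k'"
  by (auto simp: multi_idx_def)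

definition poly_deg_le :: "nat \<Rightarrow> ((real,'n::finite) vec \<Rightarrow> real) \<Rightarrow> bool" where
  "poly_deg_le k f \<longleftrightarrow> (\<exists>c. \<forall>x. f x = (\<Sum>\<alpha>\<in>multi_idx k. c \<alpha> * monom \<alpha> x))"

lemma poly_deg_le_mono:
  assumes "poly_deg_le k f" and "k \<le> k'"
  shows "poly_deg_le k' f"
proof -
  obtain c where c: "\<And>x. f x = (\<Sum>\<alpha>\<in>multi_idx k. c \<alpha> * monom \<alpha> x)"
    using assms(1) unfolding poly_deg_le_def by blast
  define c' where "c' \<alpha> = (if \<alpha> \<in> multi_idx k then c \<alpha> else 0)" for \<alpha>
  have "f x = (\<Sum>\<alpha>\<in>multi_idx k'. c' \<alpha> * monom \<alpha> x)" for x
  proof -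
    have "(\<Sum>\<alpha>\<in>multi_idx k'. c' \<alpha> * monom \<alpha> x) = (\<Sum>\<alpha>\<in>multi_idx k. c' \<alpha> * monom \<alpha> x)"
      by (rule sum.mono_neutral_right)
        (auto simp: finite_multi_idx multi_idx_mono[OF assms(2)] c'_def)
    then show ?thesis by (simp add: c c'_def)
  qed
  then show ?thesis unfolding poly_deg_le_def by blast
qed

lemma poly_deg_le_add:
  assumes "poly_deg_le k f" and "poly_deg_le k g"
  shows "poly_deg_le k (\<lambda>x. f x + g x)"
proof -
  obtain c d where "\<And>x. f x = (\<Sum>\<alpha>\<in>multi_idx k. c \<alpha> * monom \<alpha> x)"
    and "\<And>x. g x = (\<Sum>\<alpha>\<in>multi_idx k. d \<alpha> * monom \<alpha> x)"
    using assms unfolding poly_deg_le_def by blast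
  then show ?thesis unfolding poly_deg_le_def
    by (intro exI[of _ "\<lambda>\<alpha>. c \<alpha> + d \<alpha>"] allI) (simp add: distrib_right sum.distrib)
qed

lemma poly_deg_le_cmult:
  assumes "poly_deg_le k f"
  shows "poly_deg_le k (\<lambda>x. a * f x)"
proof -
  obtain c where "\<And>x. f x = (\<Sum>\<alpha>\<in>multi_idx k. c \<alpha> * monom \<alpha> x)"
    using assms unfolding poly_deg_le_def by blast
  then show ?thesis unfolding poly_deg_le_def
    by (intro exI[of _ "\<lambda>\<alpha>. a * c \<alpha>"] allI) (simp add: sum_distrib_left mult.assoc)
qed

lemma poly_deg_le_const: "poly_deg_le k (\<lambda>x::(real,'n::finite) vec. a)"
proof -
  define c where "c \<alpha> = (if \<alpha> = (\<lambda>_. 0) then a else 0)" for \<alpha> :: "'n \<Rightarrow> nat"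
  have "(\<lambda>_. 0) \<in> (multi_idx k :: ('n \<Rightarrow> nat) set)" by (simp add: multi_idx_def)
  moreover have "c \<alpha> * monom \<alpha> x = (if \<alpha> = (\<lambda>_. 0) then a else 0)" for \<alpha> x
    by (simp add: c_def monom_def)
  ultimately have "(\<Sum>\<alpha>\<in>multi_idx k. c \<alpha> * monom \<alpha> x) = a" for x :: "(real,'n) vec"
    by (simp add: finite_multi_idx)
  then show ?thesis unfolding poly_deg_le_def by metis
qed

lemma monom_mult_coord:
  "monom (\<lambda>j. \<alpha> j + (if j = i then 1 else 0)) x = monom \<alpha> x * x $ i"
proof -
  have "monom (\<lambda>j. \<alpha> j + (if j = i then 1 else 0)) x
      = monom \<alpha> x * (\<Prod>j\<in>UNIV. (x $ j) ^ (if j = i then 1 else 0))"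
    by (simp add: monom_def power_add prod.distrib)
  also have "(\<Prod>j\<in>UNIV. (x $ j) ^ (if j = i then 1 else 0)) = x $ i"
    by (simp add: if_distrib prod.If_cases)
  finally show ?thesis .
qed

lemma poly_deg_le_mult_coord:
  assumes "poly_deg_le k f"
  shows "poly_deg_le (Suc k) (\<lambda>x. f x * x $ i)"
proof -
  obtain c where c: "\<And>x. f x = (\<Sum>\<alpha>\<in>multi_idx k. c \<alpha> * monom \<alpha> x)"
    using assms unfolding poly_deg_le_def by blast
  define sh where "sh \<alpha> = (\<lambda>j. \<alpha> j + (if j = i then 1 else 0::nat))" for \<alpha> :: "'a \<Rightarrow> nat"
  have inj: "inj sh" unfolding inj_def sh_def fun_eq_iff by simp
  define c' where "c' \<gamma> = (if \<gamma> \<in> sh ` multi_idx k then c (inv sh \<gamma>) else 0)" for \<gamma>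
  have sub: "sh ` multi_idx k \<subseteq> multi_idx (Suc k)"
    by (auto simp: multi_idx_def sh_def sum.distrib)
  have "f x * x $ i = (\<Sum>\<gamma>\<in>multi_idx (Suc k). c' \<gamma> * monom \<gamma> x)" for x
  proof -
    have "f x * x $ i = (\<Sum>\<alpha>\<in>multi_idx k. c \<alpha> * monom (sh \<alpha>) x)"
      by (simp add: c sum_distrib_right sh_def monom_mult_coord mult.assoc)
    also have "\<dots> = (\<Sum>\<gamma>\<in>sh ` multi_idx k. c' \<gamma> * monom \<gamma> x)"
      by (simp add: sum.reindex[OF inj_on_subset[OF inj]] c'_def inv_f_f[OF inj])
    also have "\<dots> = (\<Sum>\<gamma>\<in>multi_idx (Suc k). c' \<gamma> * monom \<gamma> x)"
      by (rule sum.mono_neutral_left) (simp_all add: finite_multi_idx sub c'_def)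
    finally show ?thesis .
  qed
  then show ?thesis unfolding poly_deg_le_def by blast
qed

lemma poly_deg_le_prod_affine:
  fixes S :: "'k set"
  assumes "finite S"
  shows "poly_deg_le (card S) (\<lambda>x::(real,'n::finite) vec. \<Prod>k\<in>S. (x $ \<iota> k - a k) * s k)"
  using assms
proof (induction S rule: finite_induct)
  case empty
  then show ?case using poly_deg_le_const[of 0 1] by simp
next
  case (insert k S)
  let ?f = "\<lambda>x::(real,'n) vec. \<Prod>k\<in>S. (x $ \<iota> k - a k) * s k"
  have "poly_deg_le (Suc (card S)) (\<lambda>x. s k * (?f x * x $ \<iota> k) + (- s k * a k) * ?f x)"
    by (intro poly_deg_le_add poly_deg_le_cmult poly_deg_le_mult_coord
        poly_deg_le_mono[OF insert.IH]) auto
  moreover have "(\<lambda>x. s k * (?f x * x $ \<iota> k) + (- s k * a k) * ?f x)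
               = (\<lambda>x. \<Prod>k\<in>insert k S. (x $ \<iota> k - a k) * s k)"
    using insert by (auto simp: algebra_simps)
  ultimately show ?case using insert by simp
qed

lemma lagrange_poly_exists:
  fixes z :: "'k::finite \<Rightarrow> (real,'n::finite) vec"
  assumes "inj z" and "CARD('k) \<le> Suc k"
  shows "\<exists>L. poly_deg_le k L \<and> (\<forall>j. L (z j) = (if j = j0 then 1 else 0))"
proof -
  have "\<exists>i. z j0 $ i \<noteq> z j $ i" if "j \<noteq> j0" for j
    using assms(1) that by (metis inj_eq vec_eq_iff)
  then obtain \<iota> where \<iota>: "\<And>j. j \<noteq> j0 \<Longrightarrow> z j0 $ \<iota> j \<noteq> z j $ \<iota> j" by metis
  define S where "S = UNIV - {j0}"
  define L where
    "L x = (\<Prod>j\<in>S. (x $ \<iota> j - z j $ \<iota> j) * (1 / (z j0 $ \<iota> j - z j $ \<iota> j)))" for x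
  have "poly_deg_le (card S) L"
    unfolding L_def by (rule poly_deg_le_prod_affine) (simp add: S_def)
  moreover have "card S \<le> k" using assms(2) by (simp add: S_def card_Diff_singleton)
  ultimately have "poly_deg_le k L" by (rule poly_deg_le_mono)
  moreover have "L (z j) = (if j = j0 then 1 else 0)" for j
  proof (cases "j = j0")
    case True
    then show ?thesis using \<iota> by (auto simp: L_def S_def intro!: prod.neutral)
  next
    case False
    then have "j \<in> S" by (simp add: S_def)
    then show ?thesis using False by (auto simp: L_def intro!: prod_zero[of S])
  qed
  ultimately show ?thesis by blast
qed

lemma det_ne_0_if_independent_columns:
  fixes e :: "'k::finite \<Rightarrow> real^'k"
  assumes "inj e" and "independent (range e)"
  shows "det (\<chi> j k. e k $ j) \<noteq> 0"
proof -
  define A where "A = (\<chi> j k. e k $ j)"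
  have "c i = 0" if "(\<Sum>i\<in>UNIV. c i *s column i A) = 0" for c :: "'k \<Rightarrow> real" and i
  proof -
    define u where "u b = c (inv e b)" for b
    have "(\<Sum>b\<in>range e. u b *\<^sub>R b) = (\<Sum>i\<in>UNIV. c i *s column i A)"
      using assms(1) by (simp add: sum.reindex u_def A_def column_def scalar_mult_eq_scaleR)
    also have "\<dots> = 0" by (fact that)
    finally have "u (e i) = 0"
      using assms(2) unfolding independent_explicit by blast
    then show ?thesis using assms(1) by (simp add: u_def)
  qed
  then have "invertible A"
    by (simp add: invertible_left_inverse matrix_left_invertible_independent_columns)
  then show ?thesis by (simp add: A_def invertible_det_nz)
qed

lemma spanning_columns_nonsingular_minor:
  fixes col :: "'a \<Rightarrow> real^'k::finite"
  assumes "span (col ` I) = UNIV"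
  shows "\<exists>\<sigma>. (\<forall>k. \<sigma> k \<in> I) \<and> inj \<sigma> \<and> det (\<chi> j k. col (\<sigma> k) $ j) \<noteq> 0"
proof -
  obtain B where B: "B \<subseteq> col ` I" "independent B" "col ` I \<subseteq> span B"
    using maximal_independent_subset by blast
  have "span B = UNIV"
    using B(3) assms by (metis span_minimal subspace_span top.extremum_uniqueI)
  then have "card B = CARD('k)"
    using basis_card_eq_dim[of B UNIV] B(2) by simp
  then obtain e where e: "bij_betw e (UNIV::'k set) B"
    using finite_same_card_bij[of "UNIV::'k set" B] finiteI_independent[OF B(2)] by auto
  have "\<exists>\<alpha>. \<alpha> \<in> I \<and> col \<alpha> = e k" for k
    using e B(1) unfolding bij_betw_def by (metis image_iff rangeI subsetD)
  then obtain \<sigma> where \<sigma>: "\<And>k. \<sigma> k \<in> I" "\<And>k. col (\<sigma> k) = e k" by metis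
  have "inj \<sigma>"
    using e \<sigma>(2) by (metis bij_betw_def inj_def)
  moreover have "det (\<chi> j k. e k $ j) \<noteq> 0"
    using e B(2) by (intro det_ne_0_if_independent_columns) (auto simp: bij_betw_def)
  ultimately show ?thesis using \<sigma> by (intro exI[of _ \<sigma>]) simp
qed

lemma monom_matrix_nonsingular_minor:
  fixes z :: "'k::finite \<Rightarrow> (real,'n::finite) vec"
  assumes "inj z" and "CARD('k) \<le> Suc k"
  shows "\<exists>\<sigma>. (\<forall>i. \<sigma> i \<in> multi_idx k) \<and> inj \<sigma> \<and> det (\<chi> j i. monom (\<sigma> i) (z j)) \<noteq> 0"
proof -
  define col where "col \<alpha> = (\<chi> j. monom \<alpha> (z j))" for \<alpha>
  have "axis j0 1 \<in> span (col ` multi_idx k)" for j0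
  proof -
    obtain c where c: "\<And>j. (\<Sum>\<alpha>\<in>multi_idx k. c \<alpha> * monom \<alpha> (z j)) = (if j = j0 then 1 else 0)"
      using lagrange_poly_exists[OF assms, of j0] unfolding poly_deg_le_def by metis
    have "axis j0 1 = (\<Sum>\<alpha>\<in>multi_idx k. c \<alpha> *\<^sub>R col \<alpha>)"
      by (simp add: vec_eq_iff sum_component col_def c axis_def)
    also have "\<dots> \<in> span (col ` multi_idx k)"
      by (intro span_sum span_scale span_base) auto
    finally show ?thesis .
  qed
  then have "Basis \<subseteq> span (col ` multi_idx k)"
    by (auto simp: Basis_vec_def Basis_real_def)
  then have "span (col ` multi_idx k) = UNIV"
    by (metis span_Basis span_minimal subspace_span top.extremum_uniqueI)
  then obtain \<sigma> where "\<forall>i. \<sigma> i \<in> multi_idx k" "inj \<sigma>" "det (\<chi> j i. col (\<sigma> i) $ j) \<noteq> 0"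
    using spanning_columns_nonsingular_minor by blast
  then show ?thesis by (auto simp: col_def)
qed

lemma differentiable_prod:
  fixes f :: "'i \<Rightarrow> 'm::real_normed_vector \<Rightarrow> real"
  assumes "\<And>i. i \<in> S \<Longrightarrow> f i differentiable (at x)"
  shows "(\<lambda>x. \<Prod>i\<in>S. f i x) differentiable (at x)"
proof (cases "finite S")
  case True
  then show ?thesis using assms
    by (induction S rule: finite_induct) auto
qed simp

lemma differentiable_det:
  fixes F :: "'k::finite \<Rightarrow> 'k \<Rightarrow> 'm::real_normed_vector \<Rightarrow> real"
  assumes "\<And>i j. F i j differentiable (at x)"
  shows "(\<lambda>x. det (\<chi> i j. F i j x)) differentiable (at x)"
proof -
  have "(\<lambda>x. \<Sum>p\<in>{p. p permutes (UNIV::'k set)}. of_int (sign p) * (\<Prod>i\<in>UNIV. F i (p i) x))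
          differentiable (at x)"
    using assms by (intro differentiable_sum differentiable_mult differentiable_const
        differentiable_prod ballI) (auto simp: finite_permutations)
  then show ?thesis by (simp add: det_def)
qed

lemma differentiable_vec_lambda:
  fixes F :: "'k::finite \<Rightarrow> 'm::real_normed_vector \<Rightarrow> real"
  assumes "\<And>k. F k differentiable (at x)"
  shows "(\<lambda>x. \<chi> k. F k x) differentiable (at x)"
proof -
  have "(\<lambda>x. (\<chi> k. F k x) \<bullet> b) differentiable (at x)" if "b \<in> Basis" for b
    using that assms by (auto simp: Basis_vec_def inner_axis)
  then show ?thesis using differentiable_componentwise_within by blast
qed

lemma differentiable_on_cramer:
  fixes A :: "'m::euclidean_space \<Rightarrow> real^'k::finite^'k" and y :: "'m \<Rightarrow> real^'k"
  assumes A: "\<And>i j x. (\<lambda>x. A x $ i $ j) differentiable (at x)"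
    and y: "\<And>i x. (\<lambda>x. y x $ i) differentiable (at x)"
    and nonsingular: "\<And>x. x \<in> C \<Longrightarrow> det (A x) \<noteq> 0"
  shows "(\<lambda>x. \<chi> k. det (\<chi> i j. if j = k then y x $ i else A x $ i $ j) / det (A x))
           differentiable_on C"
proof (rule differentiable_at_imp_differentiable_on, rule differentiable_vec_lambda)
  fix x k assume "x \<in> C"
  have num: "(\<lambda>x. det (\<chi> i j. if j = k then y x $ i else A x $ i $ j)) differentiable (at x)"
  proof (rule differentiable_det)
    fix i j
    show "(\<lambda>x. if j = k then y x $ i else A x $ i $ j) differentiable (at x)"
      by (cases "j = k") (simp_all add: A y)
  qed
  have "(\<lambda>x. det (\<chi> i j. A x $ i $ j)) differentiable (at x)"
    by (rule differentiable_det) (rule A)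
  then have den: "(\<lambda>x. det (A x)) differentiable (at x)"
    by (simp only: vec_lambda_eta)
  show "(\<lambda>x. det (\<chi> i j. if j = k then y x $ i else A x $ i $ j) / det (A x)) differentiable (at x)"
    using num den nonsingular[OF \<open>x \<in> C\<close>] by (rule differentiable_divide)
qed

lemma differentiable_proj1: "(proj1 :: (real,'n::{finite,wellorder}) vec \<Rightarrow> real) differentiable (at x)"
  unfolding proj1_def[abs_def] by (intro bounded_linear_imp_differentiable bounded_linear_vec_nth)

lemma differentiable_monom: "monom \<alpha> differentiable (at (x::(real,'n::finite) vec))"
  unfolding monom_def[abs_def]
  by (intro differentiable_prod differentiable_power bounded_linear_imp_differentiable
      bounded_linear_vec_nth)

lemma differentiable_funpow:
  fixes f :: "'a::real_normed_vector \<Rightarrow> 'a"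
  assumes "\<And>x. f differentiable (at x)"
  shows "(f ^^ n) differentiable (at x)"
proof (induction n arbitrary: x)
  case 0
  show ?case using differentiable_ident by (simp add: id_def)
next
  case (Suc n)
  show ?case using differentiable_chain_at[OF Suc.IH assms] by (simp add: o_def)
qed

section \<open>Null sets of the product Lebesgue measure\<close>

lemma distr_PiM_lborel_reindex_Basis:
  fixes \<beta> :: "'a \<Rightarrow> 'v::euclidean_space"
  assumes "finite J" and bij: "bij_betw \<beta> J Basis"
  shows "distr (PiM Basis (\<lambda>_. lborel)) (PiM J (\<lambda>_. lborel)) (\<lambda>f. \<lambda>\<alpha>\<in>J. f (\<beta> \<alpha>))
           = PiM J (\<lambda>_. lborel :: real measure)"
proof -
  interpret PJ: product_sigma_finite "\<lambda>_::'a. lborel :: real measure" by standard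
  interpret PB: product_sigma_finite "\<lambda>_::'v. lborel :: real measure" by standard
  define R where "R = (\<lambda>f::'v \<Rightarrow> real. \<lambda>\<alpha>\<in>J. f (\<beta> \<alpha>))"
  have \<beta>: "\<alpha> \<in> J \<Longrightarrow> \<beta> \<alpha> \<in> Basis" "b \<in> Basis \<Longrightarrow> inv_into J \<beta> b \<in> J"
    "b \<in> Basis \<Longrightarrow> \<beta> (inv_into J \<beta> b) = b" "\<alpha> \<in> J \<Longrightarrow> inv_into J \<beta> (\<beta> \<alpha>) = \<alpha>" for \<alpha> b
    using bij by (auto simp: bij_betw_def inv_into_into f_inv_into_f)
  have R_meas: "R \<in> measurable (PiM Basis (\<lambda>_. lborel)) (PiM J (\<lambda>_. lborel))"
    unfolding R_def by (rule measurable_restrict) (metis \<beta>(1) measurable_component_singleton measurable_lborel1)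
  have "distr (PiM Basis (\<lambda>_. lborel)) (PiM J (\<lambda>_. lborel)) R = PiM J (\<lambda>_. lborel)"
  proof (rule PJ.PiM_eqI[OF \<open>finite J\<close>])
    fix A :: "'a \<Rightarrow> real set" assume A: "\<And>i. i \<in> J \<Longrightarrow> A i \<in> sets lborel"
    have "(\<forall>\<alpha>\<in>J. f (\<beta> \<alpha>) \<in> A \<alpha>) \<longleftrightarrow> (\<forall>b\<in>Basis. f b \<in> A (inv_into J \<beta> b))" for f
    proof
      show "\<forall>\<alpha>\<in>J. f (\<beta> \<alpha>) \<in> A \<alpha> \<Longrightarrow> \<forall>b\<in>Basis. f b \<in> A (inv_into J \<beta> b)"
        using \<beta>(2,3) by metis
      show "\<forall>b\<in>Basis. f b \<in> A (inv_into J \<beta> b) \<Longrightarrow> \<forall>\<alpha>\<in>J. f (\<beta> \<alpha>) \<in> A \<alpha>"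
        using \<beta>(1,4) by metis
    qed
    then have "R -` PiE J A \<inter> space (PiM Basis (\<lambda>_. lborel)) = PiE Basis (\<lambda>b. A (inv_into J \<beta> b))"
      by (auto simp: R_def space_PiM PiE_iff)
    then have "emeasure (distr (PiM Basis (\<lambda>_. lborel)) (PiM J (\<lambda>_. lborel)) R) (PiE J A)
        = emeasure (PiM Basis (\<lambda>_. lborel)) (PiE Basis (\<lambda>b. A (inv_into J \<beta> b)))"
      using A \<open>finite J\<close> by (subst emeasure_distr[OF R_meas]) (auto intro!: sets_PiM_I_finite)
    also have "\<dots> = (\<Prod>b\<in>Basis. emeasure lborel (A (inv_into J \<beta> b)))"
      using A by (intro PB.emeasure_PiM) (auto simp: \<beta>)
    also have "\<dots> = (\<Prod>\<alpha>\<in>J. emeasure lborel (A \<alpha>))"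
      using bij by (intro prod.reindex_bij_betw[symmetric, where h=\<beta>, THEN trans])
        (auto simp: \<beta> intro!: prod.cong)
    finally show "emeasure (distr (PiM Basis (\<lambda>_. lborel)) (PiM J (\<lambda>_. lborel)) R) (PiE J A)
        = (\<Prod>\<alpha>\<in>J. emeasure lborel (A \<alpha>))" .
  qed simp
  then show ?thesis unfolding R_def .
qed

lemma emeasure_PiM_lborel_eq_lborel:
  fixes \<beta> :: "'a \<Rightarrow> 'v::euclidean_space"
  assumes "finite J" and bij: "bij_betw \<beta> J Basis" and S: "S \<in> sets (PiM J (\<lambda>_. lborel))"
  shows "emeasure (PiM J (\<lambda>_. lborel)) S = emeasure lborel {v. (\<lambda>\<alpha>\<in>J. v \<bullet> \<beta> \<alpha>) \<in> S}"
proof -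
  define R where "R = (\<lambda>f::'v \<Rightarrow> real. \<lambda>\<alpha>\<in>J. f (\<beta> \<alpha>))"
  define E where "E f = (\<Sum>b\<in>Basis. f b *\<^sub>R b)" for f :: "'v \<Rightarrow> real"
  have \<beta>: "\<beta> \<alpha> \<in> Basis" if "\<alpha> \<in> J" for \<alpha> using bij that by (auto simp: bij_betw_def)
  have R_meas: "R \<in> measurable (PiM Basis (\<lambda>_. lborel)) (PiM J (\<lambda>_. lborel))"
    unfolding R_def by (rule measurable_restrict) (metis \<beta> measurable_component_singleton measurable_lborel1)
  have coords_meas: "(\<lambda>v. \<lambda>\<alpha>\<in>J. v \<bullet> \<beta> \<alpha>) \<in> measurable borel (PiM J (\<lambda>_. lborel))"
    by (rule measurable_restrict) auto
  have "(\<lambda>\<alpha>\<in>J. E f \<bullet> \<beta> \<alpha>) = R f" for f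
    using \<beta> by (auto simp: E_def R_def inner_sum_left inner_Basis if_distrib sum.delta cong: if_cong)
  then have "E -` {v. (\<lambda>\<alpha>\<in>J. v \<bullet> \<beta> \<alpha>) \<in> S} = R -` S" by auto
  moreover have "{v. (\<lambda>\<alpha>\<in>J. v \<bullet> \<beta> \<alpha>) \<in> S} \<in> sets borel"
    using measurable_sets[OF coords_meas S] by (simp add: vimage_def)
  ultimately have "emeasure lborel {v. (\<lambda>\<alpha>\<in>J. v \<bullet> \<beta> \<alpha>) \<in> S}
      = emeasure (PiM Basis (\<lambda>_. lborel)) (R -` S \<inter> space (PiM Basis (\<lambda>_. lborel)))"
    by (subst lborel_eq) (simp add: emeasure_distr E_def)
  also have "\<dots> = emeasure (distr (PiM Basis (\<lambda>_. lborel)) (PiM J (\<lambda>_. lborel)) R) S"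
    using S by (simp add: emeasure_distr[OF R_meas])
  also have "\<dots> = emeasure (PiM J (\<lambda>_. lborel)) S"
    unfolding R_def distr_PiM_lborel_reindex_Basis[OF assms(1,2)] ..
  finally show ?thesis by (rule sym)
qed

lemma bij_betw_axis_inv:
  fixes \<sigma> :: "'k::finite \<Rightarrow> 'a"
  assumes "inj \<sigma>"
  shows "bij_betw (\<lambda>\<alpha>. axis (inv \<sigma> \<alpha>) 1 :: real^'k) (range \<sigma>) Basis"
proof (rule bij_betw_imageI)
  show "inj_on (\<lambda>\<alpha>. axis (inv \<sigma> \<alpha>) 1 :: real^'k) (range \<sigma>)"
    using assms by (auto simp: inj_on_def axis_eq_axis)
  show "(\<lambda>\<alpha>. axis (inv \<sigma> \<alpha>) 1 :: real^'k) ` range \<sigma> = Basis"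
    using assms by (auto simp: Basis_vec_def Basis_real_def image_iff)
qed

lemma PiM_null_if_slices_lowdim_images:
  fixes \<beta> :: "'a \<Rightarrow> 'v::euclidean_space"
    and h :: "('a \<Rightarrow> real) \<Rightarrow> 'm::euclidean_space \<Rightarrow> 'v"
  assumes "finite I" and "J \<subseteq> I" and bij: "bij_betw \<beta> J Basis" and dim: "DIM('m) < DIM('v)"
    and S: "S \<in> sets (PiM I (\<lambda>_. lborel))"
    and h: "\<And>w. w \<in> space (PiM (I - J) (\<lambda>_. lborel)) \<Longrightarrow> h w differentiable_on C"
    and slices: "\<And>w v. w \<in> space (PiM (I - J) (\<lambda>_. lborel)) \<Longrightarrow>
                   merge (I - J) J (w, \<lambda>\<alpha>\<in>J. v \<bullet> \<beta> \<alpha>) \<in> S \<Longrightarrow> v \<in> h w ` C"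
  shows "S \<in> null_sets (PiM I (\<lambda>_. lborel))"
proof -
  interpret P: product_sigma_finite "\<lambda>_::'a. lborel :: real measure" by standard
  have "finite J" using assms(1,2) finite_subset by blast
  have IJ: "(I - J) \<union> J = I" using \<open>J \<subseteq> I\<close> by auto
  have slice_null: "emeasure (PiM J (\<lambda>_. lborel))
      ((\<lambda>u. merge (I - J) J (w, u)) -` S \<inter> space (PiM J (\<lambda>_. lborel))) = 0"
    if w: "w \<in> space (PiM (I - J) (\<lambda>_. lborel))" for w
  proof -
    define T where "T = (\<lambda>u. merge (I - J) J (w, u)) -` S \<inter> space (PiM J (\<lambda>_. lborel))"
    have "(\<lambda>u. merge (I - J) J (w, u)) \<in> measurable (PiM J (\<lambda>_. lborel)) (PiM ((I - J) \<union> J) (\<lambda>_. lborel))"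
      by (rule measurable_compose[OF measurable_Pair1'[OF w] measurable_merge])
    then have T: "T \<in> sets (PiM J (\<lambda>_. lborel))"
      unfolding T_def using measurable_sets S IJ by simp
    define X where "X = {v. (\<lambda>\<alpha>\<in>J. v \<bullet> \<beta> \<alpha>) \<in> T}"
    have "(\<lambda>v. \<lambda>\<alpha>\<in>J. v \<bullet> \<beta> \<alpha>) \<in> measurable borel (PiM J (\<lambda>_. lborel))"
      by (rule measurable_restrict) auto
    from measurable_sets[OF this T] have "X \<in> sets borel"
      by (simp add: X_def vimage_def)
    moreover have "negligible (h w ` C)"
      using dim h[OF w] by (intro negligible_differentiable_image_lowdim) auto
    then have "negligible X"
      by (rule negligible_subset) (auto simp: X_def T_def space_PiM intro: slices[OF w])
    ultimately have "X \<in> null_sets lborel"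
      by (simp add: negligible_iff_null_sets null_sets_completion_iff)
    then have "emeasure lborel X = 0" by (rule null_setsD1)
    then show ?thesis
      using emeasure_PiM_lborel_eq_lborel[OF \<open>finite J\<close> bij T] by (simp add: X_def T_def)
  qed
  have "emeasure (PiM I (\<lambda>_. lborel)) S = emeasure (PiM ((I - J) \<union> J) (\<lambda>_. lborel)) S"
    by (simp only: IJ)
  also have "\<dots> = (\<integral>\<^sup>+w. emeasure (PiM J (\<lambda>_. lborel))
      ((\<lambda>u. merge (I - J) J (w, u)) -` S \<inter> space (PiM J (\<lambda>_. lborel))) \<partial>PiM (I - J) (\<lambda>_. lborel))"
    using S IJ \<open>finite I\<close> \<open>finite J\<close> by (intro P.emeasure_fold_integral) auto
  also have "\<dots> = 0"
    using slice_null by (simp add: nn_integral_cong)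
  finally show ?thesis using S by (simp add: null_setsI)
qed

lemma sets_exists_zero_on_cball:
  fixes g :: "'m::euclidean_space \<Rightarrow> 'c \<Rightarrow> real"
  assumes cont: "\<And>c. continuous_on UNIV (\<lambda>x. g x c)"
    and meas: "\<And>x. (\<lambda>c. g x c) \<in> borel_measurable M"
    and nonneg: "\<And>x c. g x c \<ge> 0"
    and "r > 0"
  shows "{c \<in> space M. \<exists>x\<in>cball x0 r. g x c = 0} \<in> sets M"
proof -
  obtain Q :: "'m set" where "countable Q" and Q: "\<And>U. open U \<Longrightarrow> U \<noteq> {} \<Longrightarrow> \<exists>q\<in>Q. q \<in> U"
    using countable_dense_exists by blast
  have open_sublevel: "open {q. g q c < t}" for c t
    by (rule open_Collect_less) (auto intro: cont)
  \<comment> \<open>By compactness of the ball and continuity in x, the existential quantifier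
    over the ball reduces to one over a countable dense set.\<close>
  have "{c \<in> space M. \<exists>x\<in>cball x0 r. g x c = 0}
      = (\<Inter>n. \<Union>q\<in>Q \<inter> ball x0 r. {c \<in> space M. g q c < 1 / Suc n})" (is "?L = ?R")
  proof (intro equalityI subsetI)
    fix c assume "c \<in> ?L"
    then obtain x where c: "c \<in> space M" and x: "x \<in> cball x0 r" "g x c = 0" by blast
    have "\<exists>q\<in>Q \<inter> ball x0 r. g q c < 1 / Suc n" for n
    proof -
      have "x \<in> {q. g q c < 1 / Suc n} \<inter> closure (ball x0 r)"
        using x \<open>r > 0\<close> by simp
      then have "{q. g q c < 1 / Suc n} \<inter> ball x0 r \<noteq> {}"
        using open_Int_closure_eq_empty[OF open_sublevel] by blast
      then show ?thesis using Q[OF open_Int[OF open_sublevel open_ball]] by blast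
    qed
    then show "c \<in> ?R" using c by blast
  next
    fix c assume "c \<in> ?R"
    then have c: "c \<in> space M" and small: "\<And>n. \<exists>q\<in>ball x0 r. g q c < 1 / Suc n" by blast+
    obtain x where x: "x \<in> cball x0 r" "\<And>y. y \<in> cball x0 r \<Longrightarrow> g x c \<le> g y c"
      using continuous_attains_inf[OF compact_cball _ continuous_on_subset[OF cont]] \<open>r > 0\<close>
      by (metis centre_in_cball less_le subset_UNIV empty_iff)
    have "g x c \<le> 1 / Suc n" for n
      using small[of n] x(2) by (meson ball_subset_cball less_imp_le order_trans subsetD)
    then have "g x c \<le> 0"
      by (metis le_less_trans linorder_not_le nat_approx_posE)
    then show "c \<in> ?L" using c x(1) nonneg[of x c] by auto
  qed
  also have "\<dots> \<in> sets M"
    using \<open>countable Q\<close> meas by (intro sets.countable_INT sets.countable_UN'') auto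
  finally show ?thesis .
qed

section \<open>Linear systems depending on a low-dimensional parameter\<close>

locale differentiable_linear_system =
  fixes G :: "'k::finite \<Rightarrow> 'a \<Rightarrow> 'm::euclidean_space \<Rightarrow> real"
    and b :: "'k \<Rightarrow> 'm \<Rightarrow> real"
    and I :: "'a set"
  assumes finite_I: "finite I"
    and dim_less: "DIM('m) < CARD('k)"
    and G_differentiable: "\<And>j \<alpha> x. G j \<alpha> differentiable (at x)"
    and b_differentiable: "\<And>j x. b j differentiable (at x)"
begin

lemma sets_solvable_on_cball:
  assumes "r > 0"
  shows "{c \<in> PiE I (\<lambda>_. UNIV). \<exists>x\<in>cball x0 r. \<forall>j. (\<Sum>\<alpha>\<in>I. c \<alpha> * G j \<alpha> x) = b j x}
           \<in> sets (PiM I (\<lambda>_. lborel))"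
proof -
  define residual where "residual x c = (\<Sum>j\<in>UNIV. \<bar>(\<Sum>\<alpha>\<in>I. c \<alpha> * G j \<alpha> x) - b j x\<bar>)"
    for x c
  have "isCont (G j \<alpha>) x" "isCont (b j) x" for j \<alpha> x
    using G_differentiable b_differentiable by (auto intro: differentiable_imp_continuous_within)
  then have "{c \<in> space (PiM I (\<lambda>_. lborel)). \<exists>x\<in>cball x0 r. residual x c = 0}
               \<in> sets (PiM I (\<lambda>_. lborel))"
    unfolding residual_def using \<open>r > 0\<close>
    by (intro sets_exists_zero_on_cball continuous_at_imp_continuous_on ballI continuous_intros)
      (auto simp: sum_nonneg)
  then show ?thesis
    by (simp add: residual_def space_PiM sum_nonneg_eq_0_iff)
qed

lemma solvable_on_cball_null:
  assumes "r > 0" and \<sigma>: "\<And>k. \<sigma> k \<in> I" "inj \<sigma>"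
    and nonsingular: "\<And>x. x \<in> cball x0 r \<Longrightarrow> det (\<chi> j k. G j (\<sigma> k) x) \<noteq> 0"
  shows "{c \<in> PiE I (\<lambda>_. UNIV). \<exists>x\<in>cball x0 r. \<forall>j. (\<Sum>\<alpha>\<in>I. c \<alpha> * G j \<alpha> x) = b j x}
           \<in> null_sets (PiM I (\<lambda>_. lborel))" (is "?S \<in> _")
proof -
  define J where "J = range \<sigma>"
  have "J \<subseteq> I" using \<sigma>(1) by (auto simp: J_def)
  define \<beta> where "\<beta> \<alpha> = (axis (inv \<sigma> \<alpha>) 1 :: real^'k)" for \<alpha>
  have \<beta>_\<sigma>: "\<beta> (\<sigma> k) = axis k 1" for k by (simp add: \<beta>_def inv_f_f[OF \<sigma>(2)])
  have bij: "bij_betw \<beta> J Basis"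
    unfolding \<beta>_def J_def using \<sigma>(2) by (rule bij_betw_axis_inv)
  \<comment> \<open>Cramer's rule gives the coordinates of c in J as a function of x and of the
    remaining coordinates w.\<close>
  define A where "A x = (\<chi> j k. G j (\<sigma> k) x)" for x
  define y where "y w x = (\<chi> j. b j x - (\<Sum>\<alpha>\<in>I - J. w \<alpha> * G j \<alpha> x))" for w x
  define h where
    "h w x = (\<chi> k. det (\<chi> i j. if j = k then y w x $ i else A x $ i $ j) / det (A x))" for w x
  show ?thesis
  proof (rule PiM_null_if_slices_lowdim_images[OF finite_I _ bij])
    show "J \<subseteq> I" by fact
    show "DIM('m) < DIM(real^'k)" using dim_less by simp
    show "?S \<in> sets (PiM I (\<lambda>_. lborel))" using \<open>r > 0\<close> by (rule sets_solvable_on_cball)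
    show "h w differentiable_on cball x0 r" for w
      unfolding h_def
    proof (rule differentiable_on_cramer)
      show "(\<lambda>x. A x $ i $ j) differentiable (at x)" for i j x
        by (simp add: A_def G_differentiable)
      show "(\<lambda>x. y w x $ i) differentiable (at x)" for i x
        unfolding y_def using finite_I
        by (simp add: G_differentiable b_differentiable differentiable_diff differentiable_sum
            differentiable_mult)
    qed (use nonsingular A_def in auto)
  next
    fix w v
    define c where "c = merge (I - J) J (w, \<lambda>\<alpha>\<in>J. v \<bullet> \<beta> \<alpha>)"
    assume "merge (I - J) J (w, \<lambda>\<alpha>\<in>J. v \<bullet> \<beta> \<alpha>) \<in> ?S"
    then obtain x where x: "x \<in> cball x0 r" and eqs: "\<And>j. (\<Sum>\<alpha>\<in>I. c \<alpha> * G j \<alpha> x) = b j x"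
      unfolding c_def by blast
    have c_\<sigma>: "c (\<sigma> k) = v $ k" for k
      by (simp add: c_def merge_def J_def \<beta>_\<sigma> inner_axis)
    have c_w: "c \<alpha> = w \<alpha>" if "\<alpha> \<in> I - J" for \<alpha>
      using that by (simp add: c_def merge_def)
    have "(A x *v v) $ j = y w x $ j" for j
    proof -
      have "(\<Sum>\<alpha>\<in>I. c \<alpha> * G j \<alpha> x) = (\<Sum>\<alpha>\<in>J. c \<alpha> * G j \<alpha> x) + (\<Sum>\<alpha>\<in>I - J. c \<alpha> * G j \<alpha> x)"
        using \<open>J \<subseteq> I\<close> finite_I by (simp add: sum.subset_diff)
      also have "(\<Sum>\<alpha>\<in>J. c \<alpha> * G j \<alpha> x) = (A x *v v) $ j"
        by (simp add: J_def sum.reindex[OF \<sigma>(2)] c_\<sigma> A_def matrix_vector_mult_def mult.commute)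
      also have "(\<Sum>\<alpha>\<in>I - J. c \<alpha> * G j \<alpha> x) = (\<Sum>\<alpha>\<in>I - J. w \<alpha> * G j \<alpha> x)"
        using c_w by simp
      finally show ?thesis using eqs[of j] by (simp add: y_def)
    qed
    then have "A x *v v = y w x" by (simp add: vec_eq_iff)
    moreover have "det (A x) \<noteq> 0" using nonsingular[OF x] by (simp add: A_def)
    ultimately have "v = h w x" unfolding h_def using cramer by blast
    then show "v \<in> h w ` cball x0 r" using x by blast
  qed
qed

lemma nonsingular_solutions_null:
  "{c \<in> PiE I (\<lambda>_. UNIV). \<exists>x. (\<exists>\<sigma>. (\<forall>k. \<sigma> k \<in> I) \<and> inj \<sigma> \<and> det (\<chi> j k. G j (\<sigma> k) x) \<noteq> 0) \<and>
      (\<forall>j. (\<Sum>\<alpha>\<in>I. c \<alpha> * G j \<alpha> x) = b j x)} \<in> null_sets (completion (PiM I (\<lambda>_. lborel)))"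
  (is "?N \<in> _")
proof -
  define \<F> where "\<F> = {ball x0 r | x0 r. r > 0 \<and>
    (\<exists>\<sigma>. (\<forall>k. \<sigma> k \<in> I) \<and> inj \<sigma> \<and> (\<forall>x\<in>cball x0 r. det (\<chi> j k. G j (\<sigma> k) x) \<noteq> 0))}"
  have "\<And>B. B \<in> \<F> \<Longrightarrow> open B" by (auto simp: \<F>_def)
  then obtain \<F>' where \<F>': "\<F>' \<subseteq> \<F>" "countable \<F>'" "\<Union>\<F>' = \<Union>\<F>"
    using Lindelof by metis
  define S where "S B = {c \<in> PiE I (\<lambda>_. UNIV).
    \<exists>x\<in>closure B. \<forall>j. (\<Sum>\<alpha>\<in>I. c \<alpha> * G j \<alpha> x) = b j x}" for B
  have "S B \<in> null_sets (PiM I (\<lambda>_. lborel))" if "B \<in> \<F>" for B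
    using that by (auto simp: \<F>_def S_def intro!: solvable_on_cball_null)
  then have "(\<Union>B\<in>\<F>'. S B) \<in> null_sets (PiM I (\<lambda>_. lborel))"
    using \<F>' by (intro null_sets_UN') auto
  moreover have "?N \<subseteq> (\<Union>B\<in>\<F>'. S B)"
  proof safe
    fix c x \<sigma>
    assume c: "c \<in> PiE I (\<lambda>_. UNIV)" and \<sigma>: "\<forall>k. \<sigma> k \<in> I" "inj \<sigma>" "det (\<chi> j k. G j (\<sigma> k) x) \<noteq> 0"
      and eqs: "\<forall>j. (\<Sum>\<alpha>\<in>I. c \<alpha> * G j \<alpha> x) = b j x"
    have "isCont (\<lambda>x. det (\<chi> j k. G j (\<sigma> k) x)) x" for x
      by (intro differentiable_imp_continuous_within differentiable_det G_differentiable)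
    then have "open {x. det (\<chi> j k. G j (\<sigma> k) x) \<noteq> 0}"
      by (intro open_Collect_neq continuous_at_imp_continuous_on ballI continuous_const) auto
    then obtain e where "e > 0" "ball x e \<subseteq> {x. det (\<chi> j k. G j (\<sigma> k) x) \<noteq> 0}"
      using \<sigma>(3) open_contains_ball by blast
    moreover have "cball x (e/2) \<subseteq> ball x e" using \<open>e > 0\<close> by (auto simp: subset_iff)
    ultimately have "ball x (e/2) \<in> \<F>"
      unfolding \<F>_def using \<sigma>(1,2) by (intro CollectI exI[of _ x] exI[of _ "e/2"] exI[of _ \<sigma>]) auto
    then obtain B where "B \<in> \<F>'" "x \<in> B"
      using \<F>'(3) \<open>e > 0\<close> by (metis UnionE UnionI centre_in_ball half_gt_zero)
    moreover have "x \<in> closure B" using \<open>x \<in> B\<close> closure_subset by blast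
    ultimately show "c \<in> (\<Union>B\<in>\<F>'. S B)" using c eqs by (auto simp: S_def)
  qed
  ultimately show ?thesis
    by (meson null_sets_completion_subset null_sets_completionI)
qed

end

section \<open>Coincidences of the delay map\<close>

lemma proj1_phi_c:
  "proj1 (phi_c D \<phi> c y) = proj1 (\<phi> y) + (\<Sum>\<alpha>\<in>multi_idx (2*D-1). c \<alpha> * monom \<alpha> y)"
  by (simp add: phi_c_def proj1_def e1_def)

definition keep_proj1 ::
  "((real,'n::{finite,wellorder}) vec \<Rightarrow> (real,'n) vec) \<Rightarrow> (real,'n) vec \<Rightarrow> (real,'n) vec" where
  "keep_proj1 \<phi> y = \<phi> y + (proj1 y - proj1 (\<phi> y)) *\<^sub>R e1"

lemma differentiable_keep_proj1:
  assumes "\<And>x. \<phi> differentiable (at x)"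
  shows "keep_proj1 \<phi> differentiable (at x)"
  unfolding keep_proj1_def[abs_def]
  by (intro differentiable_add differentiable_scaleR differentiable_diff differentiable_const
      assms differentiable_proj1 differentiable_compose[OF differentiable_proj1 assms])

lemma phi_c_eq_keep_proj1:
  assumes "proj1 (phi_c D \<phi> c y) = proj1 y"
  shows "phi_c D \<phi> c y = keep_proj1 \<phi> y"
    and "(\<Sum>\<alpha>\<in>multi_idx (2*D-1). c \<alpha> * monom \<alpha> y) = proj1 y - proj1 (\<phi> y)"
proof -
  show eq: "(\<Sum>\<alpha>\<in>multi_idx (2*D-1). c \<alpha> * monom \<alpha> y) = proj1 y - proj1 (\<phi> y)"
    using assms by (simp add: proj1_phi_c)
  show "phi_c D \<phi> c y = keep_proj1 \<phi> y"
    unfolding phi_c_def keep_proj1_def eq by (rule refl)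
qed

lemma delay_map_eq_shift_iff:
  "delay_map D \<phi> c x = delay_map D \<phi> c (phi_c D \<phi> c x) \<longleftrightarrow>
     (\<forall>j<D. proj1 ((phi_c D \<phi> c ^^ Suc j) x) = proj1 ((phi_c D \<phi> c ^^ j) x))"
  by (auto simp: delay_map_def map_eq_conv funpow_swap1)

lemma phi_c_orbit_eq_keep_proj1_orbit:
  assumes "\<And>j. j < n \<Longrightarrow> proj1 ((phi_c D \<phi> c ^^ Suc j) x) = proj1 ((phi_c D \<phi> c ^^ j) x)"
    and "j \<le> n"
  shows "(phi_c D \<phi> c ^^ j) x = (keep_proj1 \<phi> ^^ j) x"
  using assms(2)
proof (induction j)
  case (Suc j)
  then show ?case
    using phi_c_eq_keep_proj1(1)[of D \<phi> c "(phi_c D \<phi> c ^^ j) x"] assms(1)[of j] by simp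
qed simp

lemma funpow_neq_if_aperiodic:
  assumes "inj f" and aperiodic: "\<forall>n\<in>{1..P}. (f ^^ n) x \<noteq> x" and "i < j" and "j \<le> i + P"
  shows "(f ^^ i) x \<noteq> (f ^^ j) x"
proof
  assume "(f ^^ i) x = (f ^^ j) x"
  also have "(f ^^ j) x = (f ^^ i) ((f ^^ (j - i)) x)"
    using \<open>i < j\<close> by (metis funpow_add comp_apply le_add_diff_inverse less_imp_le)
  finally have "(f ^^ (j - i)) x = x"
    using inj_fn[OF \<open>inj f\<close>, of i] by (metis injD)
  moreover have "j - i \<in> {1..P}" using \<open>i < j\<close> \<open>j \<le> i + P\<close> by auto
  ultimately show False using aperiodic by blast
qed

lemma aperiodic_if_far_from_fixed_points:
  fixes f :: "'a::real_normed_vector \<Rightarrow> 'a"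
  assumes "{x. f x = x} = p ` S"
    and "\<forall>n. 1 \<le> n \<and> n < P \<and> (f ^^ n) x = x \<longrightarrow> f x = x"
    and "\<forall>s\<in>S. norm (x - p s) \<ge> t" and "t > 0" and "Q < P"
  shows "\<forall>n\<in>{1..Q}. (f ^^ n) x \<noteq> x"
  using assms by force

lemma delay_coincidence_keep_proj1_orbit:
  assumes inj: "inj (phi_c D \<phi> c)" and aperiodic: "\<forall>n\<in>{1..D}. (phi_c D \<phi> c ^^ n) x \<noteq> x"
    and coincidence: "delay_map D \<phi> c x = delay_map D \<phi> c (phi_c D \<phi> c x)"
  shows "inj_on (\<lambda>j. (keep_proj1 \<phi> ^^ j) x) {..<D}"
    and "\<And>j. j < D \<Longrightarrow> (\<Sum>\<alpha>\<in>multi_idx (2*D-1). c \<alpha> * monom \<alpha> ((keep_proj1 \<phi> ^^ j) x))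
                         = proj1 ((keep_proj1 \<phi> ^^ j) x) - proj1 (\<phi> ((keep_proj1 \<phi> ^^ j) x))"
proof -
  let ?f = "phi_c D \<phi> c"
  have shift: "\<And>j. j < D \<Longrightarrow> proj1 ((?f ^^ Suc j) x) = proj1 ((?f ^^ j) x)"
    using coincidence delay_map_eq_shift_iff by blast
  note orbit = phi_c_orbit_eq_keep_proj1_orbit[OF shift]
  have neq: "(keep_proj1 \<phi> ^^ i) x \<noteq> (keep_proj1 \<phi> ^^ j) x" if "i < j" "j < D" for i j
  proof -
    have "(?f ^^ i) x \<noteq> (?f ^^ j) x"
      using that by (intro funpow_neq_if_aperiodic[OF inj aperiodic]) auto
    then show ?thesis using orbit[of i] orbit[of j] that by simp
  qed
  show "inj_on (\<lambda>j. (keep_proj1 \<phi> ^^ j) x) {..<D}"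
  proof (rule inj_onI, rule ccontr)
    fix i j assume "i \<in> {..<D}" "j \<in> {..<D}" "(keep_proj1 \<phi> ^^ i) x = (keep_proj1 \<phi> ^^ j) x" "i \<noteq> j"
    then consider "i < j" "j < D" | "j < i" "i < D" by fastforce
    then show False using neq \<open>(keep_proj1 \<phi> ^^ i) x = (keep_proj1 \<phi> ^^ j) x\<close> by cases metis+
  qed
  show "(\<Sum>\<alpha>\<in>multi_idx (2*D-1). c \<alpha> * monom \<alpha> ((keep_proj1 \<phi> ^^ j) x))
          = proj1 ((keep_proj1 \<phi> ^^ j) x) - proj1 (\<phi> ((keep_proj1 \<phi> ^^ j) x))" if "j < D" for j
  proof -
    have "proj1 (?f ((?f ^^ j) x)) = proj1 ((?f ^^ j) x)" using shift[OF that] by simp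
    from phi_c_eq_keep_proj1(2)[OF this] show ?thesis using orbit[of j] that by simp
  qed
qed

lemma delay_coincidence_nonsingular_minor:
  fixes idx :: "'k::finite \<Rightarrow> nat"
  assumes "inj (phi_c D \<phi> c)" and "\<forall>n\<in>{1..D}. (phi_c D \<phi> c ^^ n) x \<noteq> x"
    and "delay_map D \<phi> c x = delay_map D \<phi> c (phi_c D \<phi> c x)"
    and "inj idx" and idx_less: "\<And>j. idx j < D"
  shows "\<exists>\<sigma>. (\<forall>i. \<sigma> i \<in> multi_idx (2*D-1)) \<and> inj \<sigma> \<and>
           det (\<chi> j i. monom (\<sigma> i) ((keep_proj1 \<phi> ^^ idx j) x)) \<noteq> 0"
proof (rule monom_matrix_nonsingular_minor)
  have "range idx \<subseteq> {..<D}" using idx_less by auto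
  then have "inj_on (\<lambda>j. (keep_proj1 \<phi> ^^ j) x) (range idx)"
    by (rule inj_on_subset[OF delay_coincidence_keep_proj1_orbit(1)[OF assms(1-3)]])
  with \<open>inj idx\<close> show "inj (\<lambda>j. (keep_proj1 \<phi> ^^ idx j) x)"
    by (simp add: inj_def inj_on_def)
  have "CARD('k) \<le> card {..<D}"
    using \<open>inj idx\<close> idx_less by (intro card_inj_on_le) auto
  then show "CARD('k) \<le> Suc (2*D-1)" by simp
qed

lemma delay_coincidences_null:
  fixes \<phi> :: "(real,'n::{finite,wellorder}) vec \<Rightarrow> (real,'n) vec"
  assumes \<phi>: "\<And>x. \<phi> differentiable (at x)" and D: "CARD('n) < D"
  shows "{c \<in> param_space D. \<exists>x. inj (phi_c D \<phi> c) \<and> (\<forall>n\<in>{1..D}. (phi_c D \<phi> c ^^ n) x \<noteq> x) \<and>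
            delay_map D \<phi> c x = delay_map D \<phi> c (phi_c D \<phi> c x)} \<in> null_sets (leb_param D)"
    (is "?bad \<in> _")
proof -
  define I where "I = (multi_idx (2*D-1) :: ('n \<Rightarrow> nat) set)"
  \<comment> \<open>d+1 of the D orbit equations suffice; they are indexed by \<open>'n option\<close>.\<close>
  obtain idx :: "'n option \<Rightarrow> nat" where idx: "bij_betw idx UNIV {0..<CARD('n option)}"
    using ex_bij_betw_finite_nat[of "UNIV::'n option set"] by auto
  have inj_idx: "inj idx" using idx by (simp add: bij_betw_def)
  have idx_less: "idx j < D" for j
  proof -
    have "idx j < CARD('n option)" using idx by (auto simp: bij_betw_def)
    then show ?thesis using D by (simp add: card_UNIV_option)
  qed
  define G where "G j \<alpha> x = monom \<alpha> ((keep_proj1 \<phi> ^^ idx j) x)" for j \<alpha> x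
  define b where "b j x = proj1 ((keep_proj1 \<phi> ^^ idx j) x) - proj1 (\<phi> ((keep_proj1 \<phi> ^^ idx j) x))"
    for j x
  have keep_proj1_iterate: "(keep_proj1 \<phi> ^^ n) differentiable (at x)" for n x
    using differentiable_keep_proj1[OF \<phi>] by (rule differentiable_funpow)
  interpret differentiable_linear_system G b I
  proof
    show "finite I" by (simp add: I_def finite_multi_idx)
    show "DIM((real,'n) vec) < CARD('n option)" by (simp add: card_UNIV_option)
    show "G j \<alpha> differentiable (at x)" for j \<alpha> x
      unfolding G_def[abs_def] by (rule differentiable_compose[OF differentiable_monom keep_proj1_iterate])
    show "b j differentiable (at x)" for j x
      unfolding b_def[abs_def]
      by (intro differentiable_diff differentiable_compose[OF differentiable_proj1 keep_proj1_iterate]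
          differentiable_compose[OF differentiable_proj1 differentiable_compose[OF \<phi> keep_proj1_iterate]])
  qed
  have "?bad \<subseteq> {c \<in> PiE I (\<lambda>_. UNIV). \<exists>x. (\<exists>\<sigma>. (\<forall>k. \<sigma> k \<in> I) \<and> inj \<sigma> \<and> det (\<chi> j k. G j (\<sigma> k) x) \<noteq> 0) \<and>
      (\<forall>j. (\<Sum>\<alpha>\<in>I. c \<alpha> * G j \<alpha> x) = b j x)}"
  proof safe
    fix c x
    assume c: "c \<in> param_space D" and coincidence: "inj (phi_c D \<phi> c)"
      "\<forall>n\<in>{1..D}. (phi_c D \<phi> c ^^ n) x \<noteq> x" "delay_map D \<phi> c x = delay_map D \<phi> c (phi_c D \<phi> c x)"
    obtain \<sigma> where "\<forall>i. \<sigma> i \<in> I" "inj \<sigma>" "det (\<chi> j i. monom (\<sigma> i) ((keep_proj1 \<phi> ^^ idx j) x)) \<noteq> 0"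
      using delay_coincidence_nonsingular_minor[OF coincidence inj_idx idx_less] unfolding I_def by blast
    moreover have "(\<Sum>\<alpha>\<in>I. c \<alpha> * G j \<alpha> x) = b j x" for j
      using delay_coincidence_keep_proj1_orbit(2)[OF coincidence idx_less] by (simp add: G_def b_def I_def)
    ultimately show "\<exists>x. (\<exists>\<sigma>. (\<forall>k. \<sigma> k \<in> I) \<and> inj \<sigma> \<and> det (\<chi> j k. G j (\<sigma> k) x) \<noteq> 0) \<and>
        (\<forall>j. (\<Sum>\<alpha>\<in>I. c \<alpha> * G j \<alpha> x) = b j x)"
      by (auto simp: G_def)
  qed (auto simp: param_space_def I_def)
  then show ?thesis
    using nonsingular_solutions_null unfolding leb_param_def I_def
    by (rule null_sets_completion_subset)
qed

section \<open>Lebesgue points of sets of full measure\<close>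

lemma sets_cnorm_ball:
  assumes "finite I"
  shows "{c \<in> PiE I (\<lambda>_. UNIV). cnorm I (\<lambda>\<alpha>. c \<alpha> - a \<alpha>) < \<epsilon>} \<in> sets (PiM I (\<lambda>_. lborel))"
proof -
  have "(\<lambda>c. cnorm I (\<lambda>\<alpha>. c \<alpha> - a \<alpha>)) \<in> borel_measurable (PiM I (\<lambda>_. lborel))"
    unfolding cnorm_def using assms by measurable
  then have "{c \<in> space (PiM I (\<lambda>_. lborel)). cnorm I (\<lambda>\<alpha>. c \<alpha> - a \<alpha>) < \<epsilon>} \<in> sets (PiM I (\<lambda>_. lborel))"
    by measurable
  then show ?thesis by (simp add: space_PiM)
qed

lemma measure_cnorm_ball_pos:
  assumes "finite I" and "I \<noteq> {}" and "\<epsilon> > 0"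
  shows "measure (PiM I (\<lambda>_. lborel)) {c \<in> PiE I (\<lambda>_. UNIV). cnorm I (\<lambda>\<alpha>. c \<alpha> - a \<alpha>) < \<epsilon>} > 0"
    (is "measure ?M ?B > 0")
proof -
  interpret P: product_sigma_finite "\<lambda>_::'a. lborel :: real measure" by standard
  have box: "emeasure ?M (PiE I (\<lambda>\<alpha>. {a \<alpha> - t .. a \<alpha> + t})) = ennreal ((2 * t) ^ card I)"
    "emeasure ?M (PiE I (\<lambda>\<alpha>. {a \<alpha> - t <..< a \<alpha> + t})) = ennreal ((2 * t) ^ card I)"
    if "t > 0" for t
    using that \<open>finite I\<close> by (simp_all add: P.emeasure_PiM ennreal_power)
  define \<eta> where "\<eta> = \<epsilon> / real (card I)"
  have "card I > 0" using assms(1,2) by (simp add: card_gt_0_iff)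
  then have "\<eta> > 0" using \<open>\<epsilon> > 0\<close> by (simp add: \<eta>_def)
  have "PiE I (\<lambda>\<alpha>. {a \<alpha> - \<eta> <..< a \<alpha> + \<eta>}) \<subseteq> ?B"
  proof
    fix c assume c: "c \<in> PiE I (\<lambda>\<alpha>. {a \<alpha> - \<eta> <..< a \<alpha> + \<eta>})"
    have "cnorm I (\<lambda>\<alpha>. c \<alpha> - a \<alpha>) \<le> (\<Sum>\<alpha>\<in>I. \<bar>c \<alpha> - a \<alpha>\<bar>)"
      unfolding cnorm_def L2_set_def[symmetric] by (rule L2_set_le_sum_abs)
    also have "\<dots> < (\<Sum>\<alpha>\<in>I. \<eta>)"
      using c assms(1,2) by (intro sum_strict_mono) (auto simp: PiE_iff abs_less_iff)
    also have "\<dots> = \<epsilon>" using \<open>card I > 0\<close> by (simp add: \<eta>_def)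
    finally show "c \<in> ?B" using c by (auto simp: PiE_iff)
  qed
  then have "emeasure ?M (PiE I (\<lambda>\<alpha>. {a \<alpha> - \<eta> <..< a \<alpha> + \<eta>})) \<le> emeasure ?M ?B"
    by (rule emeasure_mono[OF _ sets_cnorm_ball[OF \<open>finite I\<close>]])
  moreover have "0 < emeasure ?M (PiE I (\<lambda>\<alpha>. {a \<alpha> - \<eta> <..< a \<alpha> + \<eta>}))"
    using box(2)[OF \<open>\<eta> > 0\<close>] \<open>\<eta> > 0\<close> by simp
  ultimately have "0 < emeasure ?M ?B" by (rule order.strict_trans2[rotated])
  moreover have "?B \<subseteq> PiE I (\<lambda>\<alpha>. {a \<alpha> - \<epsilon> .. a \<alpha> + \<epsilon>})"
  proof
    fix c assume c: "c \<in> ?B"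
    have "a \<alpha> - \<epsilon> \<le> c \<alpha> \<and> c \<alpha> \<le> a \<alpha> + \<epsilon>" if "\<alpha> \<in> I" for \<alpha>
      using member_le_L2_set[OF \<open>finite I\<close> that, of "\<lambda>\<alpha>. \<bar>c \<alpha> - a \<alpha>\<bar>"] c
      by (auto simp: cnorm_def L2_set_def abs_le_iff)
    then show "c \<in> PiE I (\<lambda>\<alpha>. {a \<alpha> - \<epsilon> .. a \<alpha> + \<epsilon>})"
      using c by (auto simp: PiE_iff)
  qed
  then have "emeasure ?M ?B \<le> emeasure ?M (PiE I (\<lambda>\<alpha>. {a \<alpha> - \<epsilon> .. a \<alpha> + \<epsilon>}))"
    by (rule emeasure_mono) (simp add: \<open>finite I\<close> sets_PiM_I_finite)
  then have "emeasure ?M ?B < \<infinity>"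
    using box(1)[OF \<open>\<epsilon> > 0\<close>] by (simp add: top.not_eq_extremum order_le_less_trans)
  ultimately show ?thesis
    by (simp add: measure_def enn2real_positive_iff)
qed

lemma cball_open_eq:
  "cball_open D a \<epsilon> = {c \<in> PiE (multi_idx (2*D-1)) (\<lambda>_. UNIV).
                          cnorm (multi_idx (2*D-1)) (\<lambda>\<alpha>. c \<alpha> - a \<alpha>) < \<epsilon>}"
  by (simp add: cball_open_def param_space_def)

lemma sets_cball_open:
  "cball_open D a \<epsilon> \<in> sets (PiM (multi_idx (2*D-1)) (\<lambda>_::'n::finite \<Rightarrow> nat. lborel :: real measure))"
  unfolding cball_open_eq by (rule sets_cnorm_ball[OF finite_multi_idx])

lemma measure_cball_open_pos:
  assumes "\<epsilon> > 0"
  shows "measure (leb_param D) (cball_open D a \<epsilon> :: (('n::finite \<Rightarrow> nat) \<Rightarrow> real) set) > 0"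
proof -
  have "(\<lambda>_. 0) \<in> (multi_idx (2*D-1) :: ('n \<Rightarrow> nat) set)" by (simp add: multi_idx_def)
  then have "multi_idx (2*D-1) \<noteq> ({} :: ('n \<Rightarrow> nat) set)" by blast
  from measure_cnorm_ball_pos[OF finite_multi_idx this assms]
  have "measure (PiM (multi_idx (2*D-1)) (\<lambda>_. lborel)) (cball_open D a \<epsilon>) > 0"
    unfolding cball_open_eq .
  then show ?thesis unfolding leb_param_def measure_completion[OF sets_cball_open] .
qed

lemma cball_open_subset:
  assumes "cnorm (multi_idx (2*D-1)) (\<lambda>\<alpha>. a \<alpha> - a' \<alpha>) + \<epsilon> \<le> \<epsilon>'"
  shows "cball_open D a \<epsilon> \<subseteq> cball_open D a' \<epsilon>'"
proof
  fix c assume c: "c \<in> cball_open D a \<epsilon>"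
  have "cnorm (multi_idx (2*D-1)) (\<lambda>\<alpha>. c \<alpha> - a' \<alpha>)
      \<le> cnorm (multi_idx (2*D-1)) (\<lambda>\<alpha>. c \<alpha> - a \<alpha>) + cnorm (multi_idx (2*D-1)) (\<lambda>\<alpha>. a \<alpha> - a' \<alpha>)"
    using L2_set_triangle_ineq[of "\<lambda>\<alpha>. c \<alpha> - a \<alpha>" "\<lambda>\<alpha>. a \<alpha> - a' \<alpha>"]
    by (simp add: cnorm_def L2_set_def)
  then show "c \<in> cball_open D a' \<epsilon>'" using c assms by (auto simp: cball_open_def)
qed

lemma measure_Int_cball_open:
  assumes "cball_open D a \<epsilon> - A \<in> null_sets (leb_param D)"
  shows "measure (leb_param D) (A \<inter> cball_open D a \<epsilon>) = measure (leb_param D) (cball_open D a \<epsilon>)"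
proof -
  have "A \<inter> cball_open D a \<epsilon> = cball_open D a \<epsilon> - (cball_open D a \<epsilon> - A)" by auto
  moreover have "cball_open D a \<epsilon> \<in> sets (leb_param D)"
    using sets_cball_open by (auto simp: leb_param_def)
  ultimately show ?thesis using assms by (simp add: measure_Diff_null_set)
qed

lemma lebesgue_point_if_null_diff:
  assumes "\<epsilon>0 > 0" and null: "cball_open D a \<epsilon>0 - A \<in> null_sets (leb_param D)"
  shows "lebesgue_point D A a"
proof -
  have "measure (leb_param D) (A \<inter> cball_open D a \<epsilon>) / measure (leb_param D) (cball_open D a \<epsilon>) = 1"
    if "0 < \<epsilon>" "\<epsilon> < \<epsilon>0" for \<epsilon>
  proof -
    have "cball_open D a \<epsilon> \<subseteq> cball_open D a \<epsilon>0"
      using that by (intro cball_open_subset) (simp add: cnorm_def)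
    then have "cball_open D a \<epsilon> - A \<in> null_sets (leb_param D)"
      using null unfolding leb_param_def by (blast intro: null_sets_completion_subset)
    then show ?thesis
      using measure_Int_cball_open measure_cball_open_pos[OF \<open>0 < \<epsilon>\<close>] by (metis div_self less_irrefl)
  qed
  then have "eventually (\<lambda>\<epsilon>. measure (leb_param D) (A \<inter> cball_open D a \<epsilon>)
                             / measure (leb_param D) (cball_open D a \<epsilon>) = 1) (at_right 0)"
    using \<open>\<epsilon>0 > 0\<close> unfolding eventually_at_right_field by blast
  then show ?thesis unfolding lebesgue_point_def by (rule tendsto_eventually)
qed

lemma full_measure_in_cball_open:
  assumes "r > 0" and null: "cball_open D z r - A \<in> null_sets (leb_param D)"
  shows "(\<forall>a\<in>cball_open D z r. lebesgue_point D A a) \<and> rel_prob D A (cball_open D z r) = 1"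
proof safe
  fix a assume a: "a \<in> cball_open D z r"
  let ?\<epsilon> = "r - cnorm (multi_idx (2*D-1)) (\<lambda>\<alpha>. a \<alpha> - z \<alpha>)"
  show "lebesgue_point D A a"
  proof (rule lebesgue_point_if_null_diff)
    show "?\<epsilon> > 0" using a by (simp add: cball_open_def)
    have "cball_open D a ?\<epsilon> \<subseteq> cball_open D z r" by (rule cball_open_subset) simp
    then show "cball_open D a ?\<epsilon> - A \<in> null_sets (leb_param D)"
      using null unfolding leb_param_def by (blast intro: null_sets_completion_subset)
  qed
next
  show "rel_prob D A (cball_open D z r) = 1"
    using measure_Int_cball_open[OF null] measure_cball_open_pos[OF \<open>r > 0\<close>]
    unfolding rel_prob_def by (metis div_self less_irrefl)
qed

theorem lemma16:
  fixes \<phi> :: "(real,'n::{finite,wellorder}) vec \<Rightarrow> (real,'n) vec"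
    and D m :: nat and r R a0 \<delta> :: real and y :: "(real,'n) vec"
    and \<xi> :: "nat \<Rightarrow> (('n \<Rightarrow> nat) \<Rightarrow> real) \<Rightarrow> (real,'n) vec"
  defines "I \<equiv> multi_idx (2*D-1) :: ('n \<Rightarrow> nat) set"
    and "K \<equiv> cball (0::(real,'n) vec) r"
    and "Kp \<equiv> cball y R"
  assumes diffeo: "diffeo_Ck 1 \<phi>"
    and Dge: "D \<ge> 2 * CARD('n) + 1"
    and rpos: "r > 0" and KKp: "K \<subseteq> Kp"
    and Kp_orbit: "\<forall>x\<in>K. \<forall>j\<le>D-1. (\<phi> ^^ j) x \<in> Kp"
    and a0pos: "a0 > 0"
    and Kp_orbit_c: "\<forall>c\<in>param_space D. cnorm I c \<le> a0 \<longrightarrow>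
                        (\<forall>x\<in>K. \<forall>j\<le>D-1. (phi_c D \<phi> c ^^ j) x \<in> Kp)"
    and C3: "\<forall>c\<in>param_space D. cnorm I c \<le> a0 \<longrightarrow> diffeo_Ck 3 (phi_c D \<phi> c)"
    and fixpts: "\<forall>c\<in>param_space D. cnorm I c \<le> a0 \<longrightarrow>
                   {x. phi_c D \<phi> c x = x} = (\<lambda>i. \<xi> i c) ` {1..m} \<and> inj_on (\<lambda>i. \<xi> i c) {1..m}"
    and noper: "\<forall>c\<in>param_space D. cnorm I c \<le> a0 \<longrightarrow>
                  (\<forall>x. \<forall>n. 1 \<le> n \<and> n < 2*D \<and> (phi_c D \<phi> c ^^ n) x = x \<longrightarrow> phi_c D \<phi> c x = x)"
    and hyp: "\<forall>c\<in>param_space D. cnorm I c \<le> a0 \<longrightarrow>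
                (\<forall>i\<in>{1..m}. hyperbolic_fp (phi_c D \<phi> c) (\<xi> i c))"
    and proj_distinct: "\<forall>c\<in>param_space D. cnorm I c \<le> a0 \<longrightarrow>
                (\<forall>i\<in>{1..m}. \<forall>j\<in>{1..m}. i \<noteq> j \<longrightarrow> proj1 (\<xi> i c) \<noteq> proj1 (\<xi> j c))"
    and immersive: "\<forall>c\<in>param_space D. cnorm I c \<le> a0 \<longrightarrow>
                (\<forall>i\<in>{1..m}. immersive_at D \<phi> c (\<xi> i c))"
    and \<delta>pos: "0 < \<delta>"
    and \<delta>small: "ereal \<delta> < fp_min_dist D a0 K m \<xi> / 3"
  shows "let A = {c \<in> param_space D. cnorm I c < a0 \<and>
                   (\<forall>x1\<in>K. (\<forall>j\<in>{1..m}. norm (x1 - \<xi> j c) \<ge> 3 * \<delta>) \<longrightarrow>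
                       delay_map D \<phi> c x1 \<noteq> delay_map D \<phi> c (phi_c D \<phi> c x1))};
             B = {c \<in> param_space D. cnorm I c < a0}
         in (\<forall>a\<in>B. lebesgue_point D A a) \<and> rel_prob D A B = 1"
proof -
  define A where "A = {c \<in> param_space D. cnorm I c < a0 \<and>
                   (\<forall>x1\<in>K. (\<forall>j\<in>{1..m}. norm (x1 - \<xi> j c) \<ge> 3 * \<delta>) \<longrightarrow>
                       delay_map D \<phi> c x1 \<noteq> delay_map D \<phi> c (phi_c D \<phi> c x1))}"
  define B where "B = {c \<in> param_space D. cnorm I c < a0}"
  have bad: "B - A \<subseteq> {c \<in> param_space D. \<exists>x. inj (phi_c D \<phi> c) \<and>
      (\<forall>n\<in>{1..D}. (phi_c D \<phi> c ^^ n) x \<noteq> x) \<and> delay_map D \<phi> c x = delay_map D \<phi> c (phi_c D \<phi> c x)}"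
  proof safe
    fix c assume "c \<in> B" "c \<notin> A"
    then obtain x where c: "c \<in> param_space D" "cnorm I c \<le> a0"
      and far: "\<forall>j\<in>{1..m}. norm (x - \<xi> j c) \<ge> 3 * \<delta>"
      and "delay_map D \<phi> c x = delay_map D \<phi> c (phi_c D \<phi> c x)"
      by (auto simp: A_def B_def)
    moreover have "inj (phi_c D \<phi> c)" using C3 c by (simp add: diffeo_Ck_def bij_is_inj)
    moreover have "\<forall>n\<in>{1..D}. (phi_c D \<phi> c ^^ n) x \<noteq> x"
      using fixpts noper c far \<delta>pos Dge
      by (intro aperiodic_if_far_from_fixed_points[where P = "2*D" and t = "3*\<delta>"]) auto
    ultimately show "\<exists>x. inj (phi_c D \<phi> c) \<and> (\<forall>n\<in>{1..D}. (phi_c D \<phi> c ^^ n) x \<noteq> x) \<and>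
        delay_map D \<phi> c x = delay_map D \<phi> c (phi_c D \<phi> c x)" by blast
  qed (simp add: B_def)
  have "\<And>x. \<phi> differentiable (at x)" using diffeo by (simp add: diffeo_Ck_def)
  moreover have "CARD('n) < D" using Dge by simp
  ultimately have "B - A \<in> null_sets (leb_param D)"
    using null_sets_completion_subset[OF bad delay_coincidences_null[unfolded leb_param_def]]
    unfolding leb_param_def by blast
  moreover have "B = cball_open D (\<lambda>_. 0) a0" by (simp add: B_def cball_open_def I_def)
  ultimately show ?thesis
    using full_measure_in_cball_open[OF a0pos] unfolding Let_def A_def B_def by simp
qed

end
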